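(* Fix integers $2\le k\le n'\le n$. The $n'$-grouped $(k,n)$ random-grid visual cryptography scheme described in the context is valid, i.e.: (i) for every set of $k$ of the $n$ shadow images, the recovered image obtained by stacking them has contrast $\alpha>0$; and (ii) for every $q<k$ and every set of $q$ shadow images, the recovered image obtained by stacking them has contrast $\alpha=0$.
   Context: Let $M=\lceil n/n'\rceil$, $r=n-(M-1)n'$. Each secret pixel $s\in\{0,1\}$ is shared independently as follows. Basic bits: $b_1,\ldots,b_{k-1}$ are independent uniform bits and $b_k=s\oplus b_1\oplus\cdots\oplus b_{k-1}$. There is a fixed sequence $c=(c_1,\ldots,c_{n'})\in\{1,\ldots,k\}^{n'}$ in which every value $1,\ldots,k$ occurs (the index pattern of the base $(k,n')$ scheme). The $n$ share bits form $M$ groups: groups $1,\ldots,M-1$ have $n'$ positions and group $M$ has $r$ positions. For each group $j$ an independent uniformly random permutation $\sigma_j$ of $\{1,\ldots,n'\}$ is drawn (independent of the $b_i$), and position $\delta$ of group $j$ receives the bit $b_{c_{\sigma_j(\delta)}}$ ($\delta\le r$ for group $M$); this bit is the pixel of shadow image number $(j-1)n'+\delta$. Stacking shadow images computes the OR of their bits at each pixel (0 = transparent, 1 = opaque). For a stacked set of shadow images, let $t_s$ be the probability that a recovered pixel equals $0$ given the secret pixel is $s$; the contrast is $\alpha=(t_0-t_1)/(1+t_1)$. *)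

theory Defs
  imports "HOL-Combinatorics.Permutations" "HOL-Library.FuncSet" Complex_Main
begin

text \<open>Bits are booleans: True = 1 (opaque), False = 0 (transparent).
  Shadow images are numbered 1..n, basic bits 1..k, positions 1..n'.\<close>

definition num_groups :: "nat \<Rightarrow> nat \<Rightarrow> nat" where
  "num_groups n n' = (n + n' - 1) div n'"   \<comment> \<open>M = ceiling (n / n')\<close>

text \<open>Sample space: the free basic bits b_1..b_{k-1} and the permutations
  sigma_1..sigma_M of {1..n'}; all outcomes equally likely (uniform, independent).\<close>
definition sample_space :: "nat \<Rightarrow> nat \<Rightarrow> nat \<Rightarrow>
    ((nat \<Rightarrow> bool) \<times> (nat \<Rightarrow> nat \<Rightarrow> nat)) set" where
  "sample_space n n' k =
     (PiE {1..k-1} (\<lambda>_. UNIV)) \<times>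
     (PiE {1..num_groups n n'} (\<lambda>_. {\<sigma>. \<sigma> permutes {1..n'}}))"

text \<open>Basic bit i: b_i for i < k, and b_k = s xor b_1 xor ... xor b_{k-1}.\<close>
definition basic_bit :: "nat \<Rightarrow> bool \<Rightarrow> (nat \<Rightarrow> bool) \<Rightarrow> nat \<Rightarrow> bool" where
  "basic_bit k s b i =
     (if i < k then b i else (s \<noteq> odd (card {j \<in> {1..k-1}. b j})))"

text \<open>Pixel of shadow image number m = (j-1) n' + \<delta> (1 \<le> \<delta> \<le> n'):
  the bit b_{c(sigma_j(delta))}.\<close>
definition share_bit :: "nat \<Rightarrow> nat \<Rightarrow> (nat \<Rightarrow> nat) \<Rightarrow> bool \<Rightarrow>
    ((nat \<Rightarrow> bool) \<times> (nat \<Rightarrow> nat \<Rightarrow> nat)) \<Rightarrow> nat \<Rightarrow> bool" where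
  "share_bit n' k c s \<omega> m =
     (let j = (m - 1) div n' + 1; \<delta> = (m - 1) mod n' + 1
      in basic_bit k s (fst \<omega>) (c (snd \<omega> j \<delta>)))"

definition stacked :: "nat \<Rightarrow> nat \<Rightarrow> (nat \<Rightarrow> nat) \<Rightarrow> nat set \<Rightarrow> bool \<Rightarrow>
    ((nat \<Rightarrow> bool) \<times> (nat \<Rightarrow> nat \<Rightarrow> nat)) \<Rightarrow> bool" where
  "stacked n' k c S s \<omega> = (\<exists>m\<in>S. share_bit n' k c s \<omega> m)"

definition t_prob :: "nat \<Rightarrow> nat \<Rightarrow> nat \<Rightarrow> (nat \<Rightarrow> nat) \<Rightarrow> nat set \<Rightarrow> bool \<Rightarrow> real" where
  "t_prob n n' k c S s =
     real (card {\<omega> \<in> sample_space n n' k. \<not> stacked n' k c S s \<omega>})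
     / real (card (sample_space n n' k))"

definition contrast :: "nat \<Rightarrow> nat \<Rightarrow> nat \<Rightarrow> (nat \<Rightarrow> nat) \<Rightarrow> nat set \<Rightarrow> real" where
  "contrast n n' k c S =
     (t_prob n n' k c S False - t_prob n n' k c S True) / (1 + t_prob n n' k c S True)"

end

theory Submission
  imports Defs
begin

text \<open>Fix the permutations. The stacked pixel is transparent iff every basic bit whose index
  is seen by the stacked shares is 0. If some index i is unseen, the transparent outcomes for
  s = 0 and s = 1 are equinumerous: for i < k flip the free bit b_i, which flips b_k exactly
  as a change of secret does; if b_k is unseen, the secret plays no role at all. If all k
  indices are seen, their bits xor to s, so they cannot all vanish for s = 1, whereas all-zero
  free bits make the pixel transparent for s = 0. Fewer than k shares never see all k indices,
  while k shares do for suitable permutations, because within each group any injective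
  assignment of positions extends to a permutation.\<close>

lemma inj_on_extends_to_permutation:
  assumes "finite A" "D \<subseteq> A" "inj_on f D" "f ` D \<subseteq> A"
  obtains \<sigma> where "\<sigma> permutes A" "\<And>x. x \<in> D \<Longrightarrow> \<sigma> x = f x"
proof -
  have "card (A - D) = card (A - f ` D)"
    using assms by (simp add: card_Diff_subset card_image finite_subset)
  then obtain h where h: "bij_betw h (A - D) (A - f ` D)"
    using assms(1) finite_same_card_bij by blast
  have "bij_betw (\<lambda>x. if x \<in> D then f x else h x) (D \<union> (A - D)) (f ` D \<union> (A - f ` D))"
    using assms(3) by (intro bij_betw_disjoint_Un h) (auto simp: bij_betw_imageI)
  moreover have "D \<union> (A - D) = A" "f ` D \<union> (A - f ` D) = A"
    using assms by auto
  ultimately have "bij_betw (\<lambda>x. if x \<in> D then f x else h x) A A"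
    by simp
  then have "bij_betw (\<lambda>x. if x \<in> A then if x \<in> D then f x else h x else x) A A"
    by (rule bij_betw_cong[THEN iffD1, rotated]) auto
  then have "(\<lambda>x. if x \<in> A then if x \<in> D then f x else h x else x) permutes A"
    by (rule bij_imp_permutes) simp
  then show thesis
    by (rule that) (use assms(2) in auto)
qed

lemma card_Times_filter_eq_sum:
  assumes "finite A" "finite B"
  shows "card {x \<in> A \<times> B. P x} = (\<Sum>b\<in>B. card {a \<in> A. P (a, b)})"
proof -
  have "{x \<in> A \<times> B. P x} = (\<Union>b\<in>B. {a \<in> A. P (a, b)} \<times> {b})"
    by auto
  also have "card \<dots> = (\<Sum>b\<in>B. card ({a \<in> A. P (a, b)} \<times> {b}))"
    using assms by (intro card_UN_disjoint) auto
  finally show ?thesis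
    by (simp add: card_cartesian_product)
qed

lemma odd_card_flip:
  assumes "finite A" "a \<in> A"
  shows "odd (card {x \<in> A. (P(a := \<not> P a)) x}) \<longleftrightarrow> \<not> odd (card {x \<in> A. P x})"
proof -
  define F where "F = {x \<in> A. (P(a := \<not> P a)) x}"
  show ?thesis
  proof (cases "P a")
    case True
    then have "{x \<in> A. P x} = insert a F" "a \<notin> F" "finite F"
      using assms unfolding F_def by auto
    then show ?thesis
      unfolding F_def[symmetric] by simp
  next
    case False
    then have "F = insert a {x \<in> A. P x}" "a \<notin> {x \<in> A. P x}"
      using assms(2) unfolding F_def by auto
    then show ?thesis
      unfolding F_def[symmetric] using assms(1) by simp
  qed
qed

lemma basic_bit_flip:
  assumes "i0 \<in> {1..k-1}" "i \<noteq> i0"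
  shows "basic_bit k (\<not> s) (b(i0 := \<not> b i0)) i = basic_bit k s b i"
  using odd_card_flip[OF _ assms(1), of b] assms by (auto simp: basic_bit_def)

definition all_zero_count :: "nat \<Rightarrow> bool \<Rightarrow> nat set \<Rightarrow> nat" where
  "all_zero_count k s I =
     card {b \<in> PiE {1..k-1} (\<lambda>_. UNIV). \<forall>i\<in>I. \<not> basic_bit k s b i}"

lemma all_zero_count_flip:
  assumes "i0 \<in> {1..k-1}" "i0 \<notin> I"
  shows "all_zero_count k True I = all_zero_count k False I"
proof -
  define Z where "Z s = {b \<in> PiE {1..k-1} (\<lambda>_. UNIV). \<forall>i\<in>I. \<not> basic_bit k s b i}" for s
  let ?flip = "\<lambda>b. b(i0 := \<not> b i0)"
  have "card (Z s) \<le> card (Z (\<not> s))" for s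
  proof (rule card_inj_on_le)
    show "inj_on ?flip (Z s)"
      by (rule inj_on_inverseI[where g = ?flip]) simp
    show "?flip ` Z s \<subseteq> Z (\<not> s)"
      using assms basic_bit_flip[OF assms(1)] by (fastforce simp: Z_def PiE_iff extensional_def)
    show "finite (Z (\<not> s))"
      by (simp add: Z_def finite_PiE)
  qed
  from this[of True] this[of False] show ?thesis
    unfolding all_zero_count_def Z_def[symmetric] by simp
qed

lemma all_zero_count_parity_unseen:
  assumes "\<forall>i\<in>I. i < k"
  shows "all_zero_count k True I = all_zero_count k False I"
  unfolding all_zero_count_def using assms by (simp add: basic_bit_def)

lemma all_zero_count_secret_indep:
  assumes "I \<subseteq> {1..k}" "I \<noteq> {1..k}"
  shows "all_zero_count k True I = all_zero_count k False I"
proof (cases "k \<in> I")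
  case True
  from assms obtain i0 where "i0 \<in> {1..k}" "i0 \<notin> I"
    by blast
  with True have "i0 \<in> {1..k-1}" "i0 \<notin> I"
    by (auto simp: le_less)
  then show ?thesis
    by (rule all_zero_count_flip)
next
  case False
  with assms(1) show ?thesis
    by (intro all_zero_count_parity_unseen) (auto simp: le_less)
qed

lemma all_zero_count_full_True:
  assumes "1 \<le> k"
  shows "all_zero_count k True {1..k} = 0"
proof -
  have False if zero: "\<forall>i\<in>{1..k}. \<not> basic_bit k True b i" for b
  proof -
    have "\<not> b j" if "j \<in> {1..k-1}" for j
    proof -
      have "j \<in> {1..k}" "j < k"
        using that by auto
      then have "\<not> basic_bit k True b j"
        using zero by blast
      with \<open>j < k\<close> show ?thesis
        by (simp add: basic_bit_def)
    qed
    then have no_ones: "{j \<in> {1..k-1}. b j} = {}"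
      by blast
    have "basic_bit k True b k"
      unfolding basic_bit_def no_ones by simp
    with zero assms show False
      by simp
  qed
  then have "{b \<in> PiE {1..k-1} (\<lambda>_. UNIV). \<forall>i\<in>{1..k}. \<not> basic_bit k True b i} = {}"
    by blast
  then show ?thesis
    unfolding all_zero_count_def by (simp only: card.empty)
qed

lemma all_zero_count_full_False:
  "0 < all_zero_count k False {1..k}"
proof -
  define b0 where "b0 = restrict (\<lambda>_. False) {1..k-1}"
  have no_ones: "{j \<in> {1..k-1}. b0 j} = {}"
    by (auto simp: b0_def)
  have "\<not> basic_bit k False b0 i" if "i \<in> {1..k}" for i
  proof (cases "i < k")
    case True
    with that show ?thesis
      by (auto simp: basic_bit_def b0_def)
  next
    case False
    then show ?thesis
      unfolding basic_bit_def no_ones by simp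
  qed
  moreover have "b0 \<in> PiE {1..k-1} (\<lambda>_. UNIV)"
    unfolding b0_def by (simp only: restrict_PiE_iff) simp
  ultimately have "b0 \<in> {b \<in> PiE {1..k-1} (\<lambda>_. UNIV). \<forall>i\<in>{1..k}. \<not> basic_bit k False b i}"
    by blast
  then show ?thesis
    unfolding all_zero_count_def by (intro card_gt_0_iff[THEN iffD2]) (auto simp: finite_PiE)
qed

lemma all_zero_count_True_le_False:
  assumes "1 \<le> k" "I \<subseteq> {1..k}"
  shows "all_zero_count k True I \<le> all_zero_count k False I"
proof (cases "I = {1..k}")
  case True
  then show ?thesis
    using all_zero_count_full_True[OF assms(1)] by simp
next
  case False
  then show ?thesis
    using all_zero_count_secret_indep[OF assms(2)] by simp
qed

definition group_perms :: "nat \<Rightarrow> nat \<Rightarrow> (nat \<Rightarrow> nat \<Rightarrow> nat) set" where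
  "group_perms n n' = PiE {1..num_groups n n'} (\<lambda>_. {\<sigma>. \<sigma> permutes {1..n'}})"

definition basic_bits_seen :: "nat \<Rightarrow> (nat \<Rightarrow> nat) \<Rightarrow> (nat \<Rightarrow> nat \<Rightarrow> nat) \<Rightarrow> nat set \<Rightarrow> nat set" where
  "basic_bits_seen n' c \<sigma> S = (\<lambda>m. c (\<sigma> ((m - 1) div n' + 1) ((m - 1) mod n' + 1))) ` S"

lemma stacked_iff_basic_bits_seen:
  "stacked n' k c S s (b, \<sigma>) \<longleftrightarrow> (\<exists>i\<in>basic_bits_seen n' c \<sigma> S. basic_bit k s b i)"
  by (auto simp: stacked_def share_bit_def basic_bits_seen_def Let_def)

lemma finite_group_perms: "finite (group_perms n n')"
  by (simp add: group_perms_def finite_PiE finite_permutations)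

lemma sample_space_eq_Times:
  "sample_space n n' k = PiE {1..k-1} (\<lambda>_. UNIV) \<times> group_perms n n'"
  by (simp add: sample_space_def group_perms_def)

lemma card_transparent_eq_sum:
  "card {\<omega> \<in> sample_space n n' k. \<not> stacked n' k c S s \<omega>}
     = (\<Sum>\<sigma>\<in>group_perms n n'. all_zero_count k s (basic_bits_seen n' c \<sigma> S))"
  by (simp add: sample_space_eq_Times card_Times_filter_eq_sum finite_PiE finite_group_perms
      stacked_iff_basic_bits_seen all_zero_count_def)

lemma card_sample_space_pos: "0 < card (sample_space n n' k)"
proof -
  have "restrict (\<lambda>_. id) {1..num_groups n n'} \<in> group_perms n n'"
    by (simp add: group_perms_def permutes_id)
  then have "group_perms n n' \<noteq> {}"
    by blast
  then show ?thesis
    by (simp add: sample_space_eq_Times card_gt_0_iff finite_PiE finite_group_perms PiE_eq_empty_iff)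
qed

lemma t_prob_eq_sum:
  "t_prob n n' k c S s =
     real (\<Sum>\<sigma>\<in>group_perms n n'. all_zero_count k s (basic_bits_seen n' c \<sigma> S))
     / real (card (sample_space n n' k))"
  by (simp add: t_prob_def card_transparent_eq_sum)

lemma group_index_in_range:
  fixes m n n' :: nat
  assumes "m \<in> {1..n}" "1 \<le> n'"
  shows "(m - 1) div n' + 1 \<in> {1..num_groups n n'}"
proof -
  have "(n + n' - 1) div n' = (n - 1 + n') div n'"
    using assms by (simp add: algebra_simps)
  also have "\<dots> = (n - 1) div n' + 1"
    using assms(2) by simp
  finally have "num_groups n n' = (n - 1) div n' + 1"
    by (simp add: num_groups_def)
  moreover have "(m - 1) div n' \<le> (n - 1) div n'"
    using assms(1) by (intro div_le_mono diff_le_mono) simp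
  ultimately show ?thesis
    by simp
qed

lemma basic_bits_seen_subset:
  assumes "1 \<le> n'" "S \<subseteq> {1..n}" "\<sigma> \<in> group_perms n n'" "c ` {1..n'} \<subseteq> {1..k}"
  shows "basic_bits_seen n' c \<sigma> S \<subseteq> {1..k}"
proof
  fix i
  assume "i \<in> basic_bits_seen n' c \<sigma> S"
  then obtain m where m: "m \<in> S" "i = c (\<sigma> ((m - 1) div n' + 1) ((m - 1) mod n' + 1))"
    by (auto simp: basic_bits_seen_def)
  have "(m - 1) div n' + 1 \<in> {1..num_groups n n'}"
    using m(1) assms(1,2) by (intro group_index_in_range) auto
  then have "\<sigma> ((m - 1) div n' + 1) permutes {1..n'}"
    using PiE_mem[OF assms(3)[unfolded group_perms_def]] by simp
  moreover have "(m - 1) mod n' + 1 \<in> {1..n'}"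
    using assms(1) by (simp add: Suc_leI)
  ultimately have "\<sigma> ((m - 1) div n' + 1) ((m - 1) mod n' + 1) \<in> {1..n'}"
    by (metis permutes_in_image)
  then show "i \<in> {1..k}"
    using m(2) assms(4) by blast
qed

lemma basic_bits_seen_realizable:
  assumes "1 \<le> n'" "S \<subseteq> {1..n}" "inj_on f S" "f ` S \<subseteq> c ` {1..n'}"
  obtains \<sigma> where "\<sigma> \<in> group_perms n n'" "basic_bits_seen n' c \<sigma> S = f ` S"
proof -
  define e where "e = inv_into {1..n'} c"
  have e: "e (f m) \<in> {1..n'}" "c (e (f m)) = f m" if "m \<in> S" for m
  proof -
    have "f m \<in> c ` {1..n'}"
      using that assms(4) by blast
    then show "e (f m) \<in> {1..n'}" "c (e (f m)) = f m"
      unfolding e_def by (rule inv_into_into, rule f_inv_into_f)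
  qed
  define D where "D j = {\<delta> \<in> {1..n'}. (j - 1) * n' + \<delta> \<in> S}" for j :: nat
  have "\<exists>\<tau>. \<tau> permutes {1..n'} \<and> (\<forall>\<delta>\<in>D j. \<tau> \<delta> = e (f ((j - 1) * n' + \<delta>)))" for j
  proof -
    have "D j \<subseteq> {1..n'}"
      by (auto simp: D_def)
    moreover have "inj_on (\<lambda>\<delta>. e (f ((j - 1) * n' + \<delta>))) (D j)"
    proof (rule inj_onI)
      fix \<delta> \<delta>'
      assume "\<delta> \<in> D j" "\<delta>' \<in> D j" and eq: "e (f ((j - 1) * n' + \<delta>)) = e (f ((j - 1) * n' + \<delta>'))"
      then have in_S: "(j - 1) * n' + \<delta> \<in> S" "(j - 1) * n' + \<delta>' \<in> S"
        by (simp_all add: D_def)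
      then have "f ((j - 1) * n' + \<delta>) = f ((j - 1) * n' + \<delta>')"
        using eq e(2) by metis
      with assms(3) have "(j - 1) * n' + \<delta> = (j - 1) * n' + \<delta>'"
        using in_S by (rule inj_onD)
      then show "\<delta> = \<delta>'"
        by simp
    qed
    moreover have "(\<lambda>\<delta>. e (f ((j - 1) * n' + \<delta>))) ` D j \<subseteq> {1..n'}"
      using e(1) by (auto simp: D_def)
    ultimately obtain \<tau> where "\<tau> permutes {1..n'}" "\<And>\<delta>. \<delta> \<in> D j \<Longrightarrow> \<tau> \<delta> = e (f ((j - 1) * n' + \<delta>))"
      by (rule inj_on_extends_to_permutation[OF finite_atLeastAtMost]) blast
    then show ?thesis
      by blast
  qed
  then obtain \<tau> where \<tau>: "\<And>j. \<tau> j permutes {1..n'}"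
    "\<And>j \<delta>. \<delta> \<in> D j \<Longrightarrow> \<tau> j \<delta> = e (f ((j - 1) * n' + \<delta>))"
    by metis
  define \<sigma> where "\<sigma> = restrict \<tau> {1..num_groups n n'}"
  have "\<sigma> \<in> group_perms n n'"
    using \<tau>(1) by (simp add: \<sigma>_def group_perms_def)
  moreover have "c (\<sigma> ((m - 1) div n' + 1) ((m - 1) mod n' + 1)) = f m" if "m \<in> S" for m
  proof -
    define j where "j = (m - 1) div n' + 1"
    define \<delta> where "\<delta> = (m - 1) mod n' + 1"
    have m: "m \<in> {1..n}" "(j - 1) * n' + \<delta> = m"
      using that assms(2) by (auto simp: j_def \<delta>_def)
    then have "\<delta> \<in> D j"
      using that assms(1) by (simp add: D_def \<delta>_def Suc_leI)
    moreover have "j \<in> {1..num_groups n n'}"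
      unfolding j_def using m(1) assms(1) by (rule group_index_in_range)
    ultimately have "\<sigma> j \<delta> = e (f m)"
      using \<tau>(2) m(2) by (simp add: \<sigma>_def)
    then show ?thesis
      using e(2)[OF that] by (simp add: j_def \<delta>_def)
  qed
  then have "basic_bits_seen n' c \<sigma> S = f ` S"
    unfolding basic_bits_seen_def by (rule image_cong[OF refl])
  ultimately show thesis
    by (rule that)
qed

lemma contrast_eq_0_if_card_less:
  assumes "1 \<le> n'" "S \<subseteq> {1..n}" "card S < k" "c ` {1..n'} \<subseteq> {1..k}"
  shows "contrast n n' k c S = 0"
proof -
  have "all_zero_count k True (basic_bits_seen n' c \<sigma> S) = all_zero_count k False (basic_bits_seen n' c \<sigma> S)"
    if "\<sigma> \<in> group_perms n n'" for \<sigma>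
  proof (rule all_zero_count_secret_indep)
    show "basic_bits_seen n' c \<sigma> S \<subseteq> {1..k}"
      using assms(1,2) that assms(4) by (rule basic_bits_seen_subset)
    have "card (basic_bits_seen n' c \<sigma> S) \<le> card S"
      unfolding basic_bits_seen_def by (rule card_image_le) (use assms(2) finite_subset in blast)
    with assms(3) show "basic_bits_seen n' c \<sigma> S \<noteq> {1..k}"
      by auto
  qed
  then have "t_prob n n' k c S True = t_prob n n' k c S False"
    unfolding t_prob_eq_sum by (simp cong: sum.cong)
  then show ?thesis
    by (simp add: contrast_def)
qed

lemma contrast_pos_if_card_eq:
  assumes "1 \<le> k" "1 \<le> n'" "S \<subseteq> {1..n}" "card S = k" "c ` {1..n'} = {1..k}"
  shows "0 < contrast n n' k c S"
proof -
  let ?count = "\<lambda>s \<sigma>. all_zero_count k s (basic_bits_seen n' c \<sigma> S)"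
  obtain f where f: "bij_betw f S {1..k}"
    using finite_same_card_bij[OF finite_subset[OF assms(3)] finite_atLeastAtMost, of 1 k] assms(4)
    by auto
  then obtain \<sigma>0 where \<sigma>0: "\<sigma>0 \<in> group_perms n n'" "basic_bits_seen n' c \<sigma>0 S = {1..k}"
    using basic_bits_seen_realizable[OF assms(2,3), of f c] assms(5) by (auto simp: bij_betw_def)
  have "(\<Sum>\<sigma>\<in>group_perms n n'. ?count True \<sigma>) < (\<Sum>\<sigma>\<in>group_perms n n'. ?count False \<sigma>)"
  proof (rule sum_strict_mono_ex1[OF finite_group_perms])
    show "\<forall>\<sigma>\<in>group_perms n n'. ?count True \<sigma> \<le> ?count False \<sigma>"
      using assms(1) basic_bits_seen_subset[OF assms(2,3) _ equalityD1[OF assms(5)]]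
      by (blast intro: all_zero_count_True_le_False)
    have "?count True \<sigma>0 < ?count False \<sigma>0"
      unfolding \<sigma>0(2) using all_zero_count_full_True[OF assms(1)] all_zero_count_full_False by simp
    with \<sigma>0(1) show "\<exists>\<sigma>\<in>group_perms n n'. ?count True \<sigma> < ?count False \<sigma>"
      by blast
  qed
  then have "real (\<Sum>\<sigma>\<in>group_perms n n'. ?count True \<sigma>) < real (\<Sum>\<sigma>\<in>group_perms n n'. ?count False \<sigma>)"
    by (simp only: of_nat_less_iff)
  then have "t_prob n n' k c S True < t_prob n n' k c S False"
    unfolding t_prob_eq_sum by (rule divide_strict_right_mono) (simp add: card_sample_space_pos)
  moreover have "0 \<le> t_prob n n' k c S True"
    by (simp add: t_prob_def)
  ultimately show ?thesis
    by (simp add: contrast_def)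
qed

theorem theorem2:
  fixes n n' k :: nat and c :: "nat \<Rightarrow> nat"
  assumes "2 \<le> k" and "k \<le> n'" and "n' \<le> n"
    and "c ` {1..n'} = {1..k}"
  shows "(\<forall>S. S \<subseteq> {1..n} \<and> card S = k \<longrightarrow> contrast n n' k c S > 0) \<and>
         (\<forall>q<k. \<forall>S. S \<subseteq> {1..n} \<and> card S = q \<longrightarrow> contrast n n' k c S = 0)"
proof -
  have "1 \<le> k" "1 \<le> n'"
    using assms(1,2) by simp_all
  then show ?thesis
    using contrast_pos_if_card_eq contrast_eq_0_if_card_less assms(4) by auto
qed

end
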